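(* For every objective $f_j:S_j\to[0,1]$ and every common prior $\mathbb{CP}_j$ on $S_j$, if the $N$ agents all condition on $\mathbb{CP}_j$ and communicate via the spanning-tree protocol, they globally $\langle\varepsilon_j,\delta_j\rangle$-agree (i.e. $\Pr(|E^{i,T}_j-E^{k,T}_j|\le\varepsilon_j)>1-\delta_j$ for all pairs $i,k$) after $O\!\left(N^7/(\delta_j\varepsilon_j)^2\right)$ additional messages.
   Context: Task $j$ has finite state space $S_j$ and objective $f_j$. Agents hold knowledge partitions $\Pi^{i,t}_j$ of $S_j$ (common knowledge initially), refined upon receiving messages; after conditioning on a common prior $\mathbb{CP}_j$, agent $i$'s expectation is $E^{i,t}_j=\mathbb E_{\mathbb{CP}_j}[f_j\mid\Pi^{i,t}_j(s)]$. Spanning-tree protocol: agents communicate over a strongly connected directed graph on $[N]$ using an outward and an inward spanning tree rooted at agent $1$, each of diameter $g_j=O(N)$ (worst-case ring), cycling through their edges so that each block of $O(g_j)$ messages forwards every agent's current expectation to every other agent. *)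

theory Defs
  imports "HOL-Probability.Probability"
begin

text \<open>States of the task are natural numbers in a finite set S (any finite state space
  is isomorphic to such an S, so this costs no generality while keeping the hidden
  O-constant uniform).  A knowledge partition of S is given by its
  cell function (cell of the true state s).\<close>

type_synonym kstate = "nat \<Rightarrow> nat \<Rightarrow> nat set"  \<comment> \<open>agent \<Rightarrow> state \<Rightarrow> cell\<close>

definition is_partition_of :: "nat set \<Rightarrow> (nat \<Rightarrow> nat set) \<Rightarrow> bool" where
  "is_partition_of S Q \<longleftrightarrow>
     (\<forall>s\<in>S. s \<in> Q s \<and> Q s \<subseteq> S \<and> (\<forall>s'\<in>Q s. Q s' = Q s))"

definition cexp :: "nat pmf \<Rightarrow> (nat \<Rightarrow> real) \<Rightarrow> nat set \<Rightarrow> real" where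
  "cexp P f C = (\<Sum>s\<in>C. pmf P s * f s) / (\<Sum>s\<in>C. pmf P s)"

definition agent_exp :: "nat pmf \<Rightarrow> (nat \<Rightarrow> real) \<Rightarrow> kstate \<Rightarrow> nat \<Rightarrow> nat \<Rightarrow> real" where
  "agent_exp P f K i s = cexp P f (K i s)"

text \<open>A message (u, v, A) sent during a block whose starting knowledge state is Kb:
  u forwards to v the block-start expectations of all agents k in A; v refines its
  partition by the level sets of these functions.\<close>
definition deliver :: "nat pmf \<Rightarrow> (nat \<Rightarrow> real) \<Rightarrow> kstate \<Rightarrow> kstate \<Rightarrow> nat \<times> nat \<times> nat set \<Rightarrow> kstate" where
  "deliver P f Kb K m = (case m of (u, v, A) \<Rightarrow>
     K(v := (\<lambda>s. K v s \<inter> {s'. \<forall>k\<in>A. agent_exp P f Kb k s' = agent_exp P f Kb k s})))"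

text \<open>Trees given by parent functions: in the inward tree agent i sends to pin i,
  in the outward tree agent i receives from pout i; both rooted at agent 1.\<close>
definition tdepth :: "(nat \<Rightarrow> nat) \<Rightarrow> nat \<Rightarrow> nat" where
  "tdepth p i = (LEAST k. (p ^^ k) i = 1)"

definition tsub :: "(nat \<Rightarrow> nat) \<Rightarrow> nat \<Rightarrow> nat \<Rightarrow> nat set" where
  "tsub p N i = {k \<in> {1..N}. \<exists>m. (p ^^ m) k = i}"

definition theight :: "(nat \<Rightarrow> nat) \<Rightarrow> nat \<Rightarrow> nat" where
  "theight p N = Max (tdepth p ` {1..N})"

definition spanning_trees :: "nat \<Rightarrow> (nat \<times> nat) set \<Rightarrow> (nat \<Rightarrow> nat) \<Rightarrow> (nat \<Rightarrow> nat) \<Rightarrow> bool" where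
  "spanning_trees N E pin pout \<longleftrightarrow>
     E \<subseteq> {1..N} \<times> {1..N} \<and>
     (\<forall>i\<in>{2..N}. pin i \<in> {1..N} \<and> (i, pin i) \<in> E) \<and>
     (\<forall>i\<in>{1..N}. \<exists>m. (pin ^^ m) i = 1) \<and>
     (\<forall>i\<in>{2..N}. pout i \<in> {1..N} \<and> (pout i, i) \<in> E) \<and>
     (\<forall>i\<in>{1..N}. \<exists>m. (pout ^^ m) i = 1)"

text \<open>One block: convergecast up the inward tree (deepest agents first), each agent
  forwarding the block-start expectations of its subtree; then broadcast down the
  outward tree (shallowest first), forwarding all N block-start expectations.\<close>
definition in_phase :: "nat \<Rightarrow> (nat \<Rightarrow> nat) \<Rightarrow> (nat \<times> nat \<times> nat set) list" where
  "in_phase N pin = concat (map (\<lambda>d. map (\<lambda>i. (i, pin i, tsub pin N i))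
        (filter (\<lambda>i. tdepth pin i = d) [1..<N+1])) (rev [1..<theight pin N + 1]))"

definition out_phase :: "nat \<Rightarrow> (nat \<Rightarrow> nat) \<Rightarrow> (nat \<times> nat \<times> nat set) list" where
  "out_phase N pout = concat (map (\<lambda>d. map (\<lambda>i. (pout i, i, {1..N}))
        (filter (\<lambda>i. tdepth pout i = d) [1..<N+1])) [1..<theight pout N + 1])"

definition st_sched :: "nat \<Rightarrow> (nat \<Rightarrow> nat) \<Rightarrow> (nat \<Rightarrow> nat) \<Rightarrow> (nat \<times> nat \<times> nat set) list" where
  "st_sched N pin pout = in_phase N pin @ out_phase N pout"

definition run_msgs :: "nat pmf \<Rightarrow> (nat \<Rightarrow> real) \<Rightarrow> (nat \<times> nat \<times> nat set) list \<Rightarrow> kstate \<Rightarrow> kstate" where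
  "run_msgs P f ms Kb = fold (\<lambda>m K. deliver P f Kb K m) ms Kb"

definition st_run :: "nat pmf \<Rightarrow> (nat \<Rightarrow> real) \<Rightarrow> nat \<Rightarrow> (nat \<Rightarrow> nat) \<Rightarrow> (nat \<Rightarrow> nat) \<Rightarrow> kstate \<Rightarrow> nat \<Rightarrow> kstate" where
  "st_run P f N pin pout K0 t =
     (let sch = st_sched N pin pout; L = length sch;
          Kb = (run_msgs P f sch ^^ (t div L)) K0
      in run_msgs P f (take (t mod L) sch) Kb)"

definition global_agree :: "nat pmf \<Rightarrow> (nat \<Rightarrow> real) \<Rightarrow> nat \<Rightarrow> kstate \<Rightarrow> real \<Rightarrow> real \<Rightarrow> bool" where
  "global_agree P f N K \<epsilon> \<delta> \<longleftrightarrow>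
     (\<forall>i\<in>{1..N}. \<forall>k\<in>{1..N}.
        measure_pmf.prob P {s. \<bar>agent_exp P f K i s - agent_exp P f K k s\<bar> \<le> \<epsilon>} > 1 - \<delta>)"

end

theory Submission
  imports Defs
begin

text \<open>
  The potential \<open>\<Phi> = \<Sum>\<^sub>i E[(E\<^sup>i)\<^sup>2]\<close> lies in \<open>[0, N]\<close>, and when an agent's
  partition is refined, its term grows by exactly the mean squared change of its expectation
  (Pythagoras for conditional expectations). One block of the schedule consists of at most \<open>2N\<close>
  messages and tells every agent the block-start expectation of every other agent. If agents
  \<open>i\<close> and \<open>k\<close> do not \<open>\<langle>\<epsilon>,\<delta>\<rangle>\<close>-agree at the start of a block, then afterwards both are at
  least as informed as the joint level sets of \<open>E\<^sup>i\<close> and \<open>E\<^sup>k\<close>; the conditional expectation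
  \<open>W\<close> on these level sets is at distance \<open>\<ge> \<epsilon>/2\<close> from one of them wherever
  \<open>\<bar>E\<^sup>i - E\<^sup>k\<bar> > \<epsilon>\<close>, an event of probability \<open>\<ge> \<delta>\<close>, so \<open>\<Phi>\<close> grows by at least
  \<open>\<delta>\<epsilon>\<^sup>2/2 \<ge> (\<delta>\<epsilon>)\<^sup>2/2\<close>. Hence agreement is reached after at most \<open>2N/(\<delta>\<epsilon>)\<^sup>2\<close> blocks,
  i.e. \<open>4N\<^sup>2/(\<delta>\<epsilon>)\<^sup>2\<close> messages, which is within the stated \<open>O(N\<^sup>7/(\<delta>\<epsilon>)\<^sup>2)\<close>.
\<close>

section \<open>Partitions and conditional expectations\<close>

lemma partition_cell_eq:
  assumes "is_partition_of S Q" "s \<in> S" "t \<in> Q s"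
  shows "Q t = Q s" and "t \<in> S"
  using assms unfolding is_partition_of_def by blast+

lemma partition_cell_self:
  assumes "is_partition_of S Q" "s \<in> S"
  shows "s \<in> Q s" and "Q s \<subseteq> S"
  using assms unfolding is_partition_of_def by blast+

lemma partition_inter_level_sets:
  assumes Q: "is_partition_of S Q"
  shows "is_partition_of S (\<lambda>s. Q s \<inter> {s'. \<forall>k\<in>A. g k s' = g k s})"
  unfolding is_partition_of_def
proof (intro ballI conjI)
  fix s assume s: "s \<in> S"
  then show "s \<in> Q s \<inter> {s'. \<forall>k\<in>A. g k s' = g k s}" "Q s \<inter> {s'. \<forall>k\<in>A. g k s' = g k s} \<subseteq> S"
    using partition_cell_self[OF Q s] by auto
  fix t assume t: "t \<in> Q s \<inter> {s'. \<forall>k\<in>A. g k s' = g k s}"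
  then have "Q t = Q s" using partition_cell_eq(1)[OF Q s] by blast
  moreover have "{s'. \<forall>k\<in>A. g k s' = g k t} = {s'. \<forall>k\<in>A. g k s' = g k s}" using t by auto
  ultimately show "Q t \<inter> {s'. \<forall>k\<in>A. g k s' = g k t} = Q s \<inter> {s'. \<forall>k\<in>A. g k s' = g k s}"
    by simp
qed

lemma sum_partition_cells:
  assumes S: "finite S" and Q: "is_partition_of S Q"
  shows "(\<Sum>s\<in>S. h s) = (\<Sum>C\<in>Q ` S. \<Sum>s\<in>C. h s)"
proof -
  have "{t \<in> S. Q t = Q s} = Q s" if "s \<in> S" for s
    using Q that by (auto dest: partition_cell_eq partition_cell_self)
  then show ?thesis
    by (auto simp: sum.image_gen[OF S, of h Q] intro!: sum.cong)
qed

lemma measure_pmf_prob_eq_sum: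
  assumes "finite S" "set_pmf P \<subseteq> S"
  shows "measure_pmf.prob P A = (\<Sum>s\<in>S. pmf P s * indicator A s)"
proof -
  have "S \<inter> A \<inter> set_pmf P = A \<inter> set_pmf P" using assms(2) by blast
  then have "measure_pmf.prob P A = measure_pmf.prob P (S \<inter> A)"
    by (metis measure_Int_set_pmf)
  also have "\<dots> = (\<Sum>s\<in>S. pmf P s * indicator A s)"
    using assms(1) by (simp add: measure_measure_pmf_finite sum.inter_restrict indicator_def)
  finally show ?thesis .
qed

lemma sum_pmf_mult_cexp:
  assumes "finite C"
  shows "(\<Sum>s\<in>C. pmf P s) * cexp P f C = (\<Sum>s\<in>C. pmf P s * f s)"
proof (cases "(\<Sum>s\<in>C. pmf P s) = 0")
  case True
  then have "\<forall>s\<in>C. pmf P s = 0" using assms by (simp add: sum_nonneg_eq_0_iff)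
  then show ?thesis using True by simp
next
  case False
  then show ?thesis unfolding cexp_def by simp
qed

lemma cexp_bounds:
  assumes "finite C" "\<And>s. s \<in> C \<Longrightarrow> 0 \<le> f s \<and> f s \<le> 1"
  shows "0 \<le> cexp P f C" and "cexp P f C \<le> 1"
proof -
  have "(\<Sum>s\<in>C. pmf P s * f s) \<le> (\<Sum>s\<in>C. pmf P s)"
    using assms(2) by (intro sum_mono) (simp add: mult_left_le)
  moreover have "0 \<le> (\<Sum>s\<in>C. pmf P s * f s)"
    using assms(2) by (intro sum_nonneg) simp
  moreover have "0 \<le> sum (pmf P) C"
    by (intro sum_nonneg) simp
  ultimately show "0 \<le> cexp P f C" "cexp P f C \<le> 1"
    unfolding cexp_def by (auto simp: divide_le_eq_1 order.order_iff_strict)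
qed

lemma cexp_tower:
  assumes S: "finite S" and Q: "is_partition_of S Q"
    and Z: "\<And>s t. s \<in> S \<Longrightarrow> t \<in> Q s \<Longrightarrow> Z t = Z s"
  shows "(\<Sum>s\<in>S. pmf P s * cexp P f (Q s) * Z s) = (\<Sum>s\<in>S. pmf P s * f s * Z s)"
proof -
  have cell: "(\<Sum>t\<in>Q s. pmf P t * cexp P f (Q t) * Z t) = (\<Sum>t\<in>Q s. pmf P t * f t * Z t)"
    if s: "s \<in> S" for s
  proof -
    have fin: "finite (Q s)" using S Q s by (meson partition_cell_self(2) finite_subset)
    have "(\<Sum>t\<in>Q s. pmf P t * cexp P f (Q t) * Z t) = (\<Sum>t\<in>Q s. pmf P t * cexp P f (Q s) * Z s)"
      using Q s Z by (intro sum.cong) (auto dest: partition_cell_eq(1))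
    also have "\<dots> = (\<Sum>t\<in>Q s. pmf P t * f t) * Z s"
      by (simp add: sum_distrib_right[symmetric] sum_pmf_mult_cexp[OF fin])
    also have "\<dots> = (\<Sum>t\<in>Q s. pmf P t * f t * Z t)"
      using s Z by (simp add: sum_distrib_right)
    finally show ?thesis .
  qed
  show ?thesis
    unfolding sum_partition_cells[OF S Q] by (rule sum.cong[OF refl]) (auto simp: cell)
qed

definition mean_sq_diff :: "nat pmf \<Rightarrow> nat set \<Rightarrow> (nat \<Rightarrow> real) \<Rightarrow> (nat \<Rightarrow> real) \<Rightarrow> real" where
  "mean_sq_diff P S X Y = (\<Sum>s\<in>S. pmf P s * (X s - Y s)\<^sup>2)"

lemma mean_sq_diff_nonneg: "0 \<le> mean_sq_diff P S X Y"
  unfolding mean_sq_diff_def by (intro sum_nonneg) simp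

lemma cexp_pythagoras:
  assumes S: "finite S" and Q: "is_partition_of S Q" and G: "is_partition_of S G"
    and QG: "\<And>s. s \<in> S \<Longrightarrow> Q s \<subseteq> G s"
    and Y: "\<And>s t. s \<in> S \<Longrightarrow> t \<in> G s \<Longrightarrow> Y t = Y s"
  shows "mean_sq_diff P S (\<lambda>s. cexp P f (Q s)) Y
       = mean_sq_diff P S (\<lambda>s. cexp P f (Q s)) (\<lambda>s. cexp P f (G s))
       + mean_sq_diff P S (\<lambda>s. cexp P f (G s)) Y"
proof -
  define a where "a s = cexp P f (Q s)" for s
  define b where "b s = cexp P f (G s)" for s
  define Z where "Z s = b s - Y s" for s
  have ZG: "Z t = Z s" if "s \<in> S" "t \<in> G s" for s t
    using that Y partition_cell_eq(1)[OF G that] unfolding Z_def b_def by simp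
  have ZQ: "Z t = Z s" if "s \<in> S" "t \<in> Q s" for s t
    using that QG ZG by blast
  have cross: "(\<Sum>s\<in>S. pmf P s * a s * Z s) = (\<Sum>s\<in>S. pmf P s * b s * Z s)"
    unfolding a_def b_def using cexp_tower[OF S Q ZQ] cexp_tower[OF S G ZG] by simp
  have "mean_sq_diff P S a Y = (\<Sum>s\<in>S. pmf P s * (a s - b s)\<^sup>2 + pmf P s * (b s - Y s)\<^sup>2
      + 2 * (pmf P s * a s * Z s - pmf P s * b s * Z s))"
    unfolding mean_sq_diff_def Z_def by (intro sum.cong refl) (simp add: power2_eq_square algebra_simps)
  also have "\<dots> = mean_sq_diff P S a b + mean_sq_diff P S b Y
      + 2 * ((\<Sum>s\<in>S. pmf P s * a s * Z s) - (\<Sum>s\<in>S. pmf P s * b s * Z s))"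
    unfolding mean_sq_diff_def by (simp add: sum.distrib sum_subtractf sum_distrib_left right_diff_distrib)
  finally show ?thesis
    using cross unfolding a_def b_def by simp
qed

section \<open>The spanning-tree schedule\<close>

lemma deliver_subset: "deliver P f Kb K m w s \<subseteq> K w s"
  unfolding deliver_def by (cases m) auto

lemma deliver_partition:
  assumes "is_partition_of S (K w)"
  shows "is_partition_of S (deliver P f Kb K m w)"
proof (cases m)
  case (fields u v A)
  then show ?thesis
    using assms partition_inter_level_sets[OF assms] unfolding deliver_def by (cases "w = v") simp_all
qed

lemma fold_deliver_subset: "fold (\<lambda>m K. deliver P f Kb K m) ms K w s \<subseteq> K w s"
  by (induction ms arbitrary: K) (simp_all, use deliver_subset in blast)

lemma fold_deliver_partition:
  "is_partition_of S (K w) \<Longrightarrow> is_partition_of S (fold (\<lambda>m K. deliver P f Kb K m) ms K w)"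
  by (induction ms arbitrary: K) (simp_all add: deliver_partition)

lemma fold_deliver_level_set:
  assumes "(u, v, A) \<in> set ms"
  shows "fold (\<lambda>m K. deliver P f Kb K m) ms K v s
    \<subseteq> {s'. \<forall>k\<in>A. agent_exp P f Kb k s' = agent_exp P f Kb k s}"
  using assms
proof (induction ms arbitrary: K)
  case (Cons m ms)
  show ?case
  proof (cases "m = (u, v, A)")
    case True
    have "fold (\<lambda>m K. deliver P f Kb K m) (m # ms) K v s \<subseteq> deliver P f Kb K m v s"
      using fold_deliver_subset by simp
    also have "\<dots> \<subseteq> {s'. \<forall>k\<in>A. agent_exp P f Kb k s' = agent_exp P f Kb k s}"
      using True unfolding deliver_def by auto
    finally show ?thesis .
  next
    case False
    then show ?thesis using Cons by simp
  qed
qed simp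

lemma set_phase:
  "set (concat (map (\<lambda>d. map g (filter (\<lambda>i. D i = d) xs)) ds)) = g ` {i \<in> set xs. D i \<in> set ds}"
  by auto

lemma length_phase:
  "distinct ds \<Longrightarrow>
    length (concat (map (\<lambda>d. map g (filter (\<lambda>i. D i = d) xs)) ds)) = length (filter (\<lambda>i. D i \<in> set ds) xs)"
proof (induction ds)
  case (Cons d ds)
  have "length (filter (\<lambda>i. D i \<in> set (d # ds)) xs)
      = length (filter (\<lambda>i. D i = d) xs) + length (filter (\<lambda>i. D i \<in> set ds) xs)"
    using Cons.prems by (induction xs) auto
  then show ?case using Cons by simp
qed simp

lemma length_st_sched: "length (st_sched N pin pout) \<le> 2 * N"
proof -
  have "length (filter Q [1..<N+1]) \<le> N" for Q
    by (metis length_filter_le length_upt add_diff_cancel_right')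
  then have "length (in_phase N pin) \<le> N" "length (out_phase N pout) \<le> N"
    unfolding in_phase_def out_phase_def by (simp_all only: length_phase distinct_rev distinct_upt)
  then show ?thesis unfolding st_sched_def by simp
qed

lemma tdepth_le_theight: "i \<in> {1..N} \<Longrightarrow> tdepth p i \<le> theight p N"
  unfolding theight_def by (intro Max_ge) auto

lemma tdepth_pos:
  assumes "(p ^^ m) i = 1" "i \<noteq> 1"
  shows "0 < tdepth p i"
proof -
  have "(p ^^ tdepth p i) i = 1"
    unfolding tdepth_def using assms(1) by (rule LeastI)
  then show ?thesis using assms(2) by (cases "tdepth p i") auto
qed

lemma tdepth_child_of_root:
  assumes "p c = 1" "c \<noteq> 1"
  shows "tdepth p c = 1"
  unfolding tdepth_def
proof (rule Least_equality)
  show "(p ^^ 1) c = 1" using assms(1) by simp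
  show "1 \<le> y" if "(p ^^ y) c = 1" for y using that assms(2) by (cases y) auto
qed

lemma ex_child_of_root_ancestor:
  fixes p :: "nat \<Rightarrow> nat"
  assumes p: "\<And>i. i \<in> {2..N} \<Longrightarrow> p i \<in> {1..N}"
    and "(p ^^ m) k = 1" "k \<in> {2..N}"
  shows "\<exists>c\<in>{2..N}. p c = 1 \<and> (\<exists>j. (p ^^ j) k = c)"
  using assms(2,3)
proof (induction m arbitrary: k)
  case (Suc m)
  show ?case
  proof (cases "p k = 1")
    case True
    then show ?thesis using Suc.prems(2) by (metis funpow_0)
  next
    case False
    then have "p k \<in> {2..N}" using p[OF Suc.prems(2)] by auto
    moreover have "(p ^^ m) (p k) = 1" using Suc.prems(1) by (metis comp_apply funpow_Suc_right)
    ultimately obtain c j where "c \<in> {2..N}" "p c = 1" "(p ^^ j) (p k) = c"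
      using Suc.IH by blast
    then show ?thesis by (metis funpow_Suc_right comp_apply)
  qed
qed auto

lemma out_phase_reaches:
  assumes sp: "spanning_trees N E pin pout" and v: "v \<in> {2..N}"
  shows "(pout v, v, {1..N}) \<in> set (out_phase N pout)"
proof -
  have "v \<in> {1..N}" using v by simp
  then obtain m where "(pout ^^ m) v = 1" using sp unfolding spanning_trees_def by blast
  then have "0 < tdepth pout v" using v by (intro tdepth_pos) auto
  moreover have "tdepth pout v \<le> theight pout N" using v by (intro tdepth_le_theight) auto
  ultimately show ?thesis
    using v unfolding out_phase_def set_phase by (intro image_eqI[of _ _ v]) auto
qed

lemma in_phase_reaches_root:
  assumes sp: "spanning_trees N E pin pout" and k: "k \<in> {2..N}"
  shows "\<exists>c A. (c, 1, A) \<in> set (in_phase N pin) \<and> k \<in> A"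
proof -
  have "k \<in> {1..N}" using k by simp
  then obtain m where "(pin ^^ m) k = 1" using sp unfolding spanning_trees_def by blast
  moreover have "\<And>i. i \<in> {2..N} \<Longrightarrow> pin i \<in> {1..N}" using sp unfolding spanning_trees_def by blast
  ultimately obtain c j where c: "c \<in> {2..N}" "pin c = 1" "(pin ^^ j) k = c"
    using ex_child_of_root_ancestor k by metis
  have "tdepth pin c = 1" using c by (intro tdepth_child_of_root) auto
  moreover have "1 \<le> theight pin N" using tdepth_le_theight[of c N pin] c calculation by simp
  ultimately have "(c, 1, tsub pin N c) \<in> set (in_phase N pin)"
    using c unfolding in_phase_def set_phase by (intro image_eqI[of _ _ c]) auto
  moreover have "k \<in> tsub pin N c" using c k unfolding tsub_def by auto
  ultimately show ?thesis by blast
qed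

lemma st_sched_covers:
  assumes sp: "spanning_trees N E pin pout" and "v \<in> {1..N}" "k \<in> {1..N}" "k \<noteq> v"
  shows "\<exists>u A. (u, v, A) \<in> set (st_sched N pin pout) \<and> k \<in> A"
proof (cases "v = 1")
  case True
  then show ?thesis using in_phase_reaches_root[OF sp, of k] assms unfolding st_sched_def by auto
next
  case False
  then have "v \<in> {2..N}" using assms(2) by simp
  then show ?thesis using out_phase_reaches[OF sp] assms(3) unfolding st_sched_def by fastforce
qed

lemma run_msgs_subset: "run_msgs P f ms Kb v s \<subseteq> Kb v s"
  unfolding run_msgs_def by (rule fold_deliver_subset)

lemma run_msgs_partition:
  "is_partition_of S (Kb i) \<Longrightarrow> is_partition_of S (run_msgs P f ms Kb i)"
  unfolding run_msgs_def by (rule fold_deliver_partition)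

lemma block_cell_level_set:
  assumes sp: "spanning_trees N E pin pout" and Kb: "is_partition_of S (Kb v)"
    and v: "v \<in> {1..N}" and s: "s \<in> S" and k: "k \<in> {1..N}"
    and s': "s' \<in> run_msgs P f (st_sched N pin pout) Kb v s"
  shows "agent_exp P f Kb k s' = agent_exp P f Kb k s"
  \<comment> \<open>Messages carry block-start expectations, so their order within the block is irrelevant.\<close>
proof (cases "k = v")
  case True
  have "s' \<in> Kb v s" using s' run_msgs_subset by blast
  then have "Kb v s' = Kb v s" by (rule partition_cell_eq(1)[OF Kb s])
  then show ?thesis using True unfolding agent_exp_def by simp
next
  case False
  then obtain u A where "(u, v, A) \<in> set (st_sched N pin pout)" "k \<in> A"
    using st_sched_covers[OF sp v k] by blast
  then show ?thesis using s' fold_deliver_level_set unfolding run_msgs_def by blast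
qed

lemma st_run_block_multiple:
  "st_run P f N pin pout K0 (n * length (st_sched N pin pout)) = (run_msgs P f (st_sched N pin pout) ^^ n) K0"
proof (cases "st_sched N pin pout = []")
  case True
  then have "run_msgs P f (st_sched N pin pout) = id" unfolding run_msgs_def by auto
  then show ?thesis using True unfolding st_run_def Let_def by simp
qed (simp add: st_run_def run_msgs_def)

section \<open>The potential\<close>

definition potential :: "nat pmf \<Rightarrow> (nat \<Rightarrow> real) \<Rightarrow> nat \<Rightarrow> nat set \<Rightarrow> kstate \<Rightarrow> real" where
  "potential P f N S K = (\<Sum>i\<in>{1..N}. mean_sq_diff P S (agent_exp P f K i) (\<lambda>_. 0))"

lemma potential_nonneg: "0 \<le> potential P f N S K"
  unfolding potential_def by (intro sum_nonneg mean_sq_diff_nonneg)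

lemma potential_le:
  assumes S: "finite S" and P: "set_pmf P \<subseteq> S" and f: "\<And>s. s \<in> S \<Longrightarrow> 0 \<le> f s \<and> f s \<le> 1"
    and K: "\<And>i. i \<in> {1..N} \<Longrightarrow> is_partition_of S (K i)"
  shows "potential P f N S K \<le> N"
proof -
  have "mean_sq_diff P S (agent_exp P f K i) (\<lambda>_. 0) \<le> 1" if i: "i \<in> {1..N}" for i
  proof -
    have "(agent_exp P f K i s)\<^sup>2 \<le> 1" if s: "s \<in> S" for s
    proof -
      have "finite (K i s)" "K i s \<subseteq> S"
        using partition_cell_self(2)[OF K[OF i] s] S by (auto intro: finite_subset)
      then show ?thesis
        using cexp_bounds[of "K i s" f P] f unfolding agent_exp_def by (auto intro: power_le_one)
    qed
    then have "mean_sq_diff P S (agent_exp P f K i) (\<lambda>_. 0) \<le> (\<Sum>s\<in>S. pmf P s)"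
      unfolding mean_sq_diff_def by (intro sum_mono) (simp add: mult_left_le)
    then show ?thesis using sum_pmf_eq_1[OF S P] by simp
  qed
  then have "potential P f N S K \<le> (\<Sum>i\<in>{1..N}. 1)"
    unfolding potential_def by (intro sum_mono)
  then show ?thesis by simp
qed

lemma potential_increment:
  assumes S: "finite S"
    and K: "\<And>i. i \<in> {1..N} \<Longrightarrow> is_partition_of S (K i)"
    and K': "\<And>i. i \<in> {1..N} \<Longrightarrow> is_partition_of S (K' i)"
    and refines: "\<And>i s. i \<in> {1..N} \<Longrightarrow> s \<in> S \<Longrightarrow> K' i s \<subseteq> K i s"
  shows "potential P f N S K'
       = potential P f N S K + (\<Sum>i\<in>{1..N}. mean_sq_diff P S (agent_exp P f K' i) (agent_exp P f K i))"
proof -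
  have "mean_sq_diff P S (agent_exp P f K' i) (\<lambda>_. 0)
      = mean_sq_diff P S (agent_exp P f K i) (\<lambda>_. 0) + mean_sq_diff P S (agent_exp P f K' i) (agent_exp P f K i)"
    if i: "i \<in> {1..N}" for i
    using cexp_pythagoras[OF S K'[OF i] K[OF i] refines[OF i], of "\<lambda>_. 0" P f]
    unfolding agent_exp_def by simp
  then show ?thesis
    unfolding potential_def sum.distrib[symmetric] by (intro sum.cong) simp_all
qed

lemma disagreement_prob:
  assumes S: "finite S" and P: "set_pmf P \<subseteq> S" and "0 \<le> \<epsilon>" "0 < \<delta>"
    and "\<not> global_agree P f N K \<epsilon> \<delta>"
  obtains i k where "i \<in> {1..N}" "k \<in> {1..N}" "i \<noteq> k"
    and "\<delta> \<le> (\<Sum>s\<in>S. pmf P s * indicator {s. \<epsilon> < \<bar>agent_exp P f K i s - agent_exp P f K k s\<bar>} s)"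
proof -
  obtain i k where ik: "i \<in> {1..N}" "k \<in> {1..N}"
    and le: "measure_pmf.prob P {s. \<bar>agent_exp P f K i s - agent_exp P f K k s\<bar> \<le> \<epsilon>} \<le> 1 - \<delta>"
    using assms(5) unfolding global_agree_def by (auto simp: not_less)
  define D where "D = {s. \<epsilon> < \<bar>agent_exp P f K i s - agent_exp P f K k s\<bar>}"
  have "measure_pmf.prob P D = 1 - measure_pmf.prob P {s. \<bar>agent_exp P f K i s - agent_exp P f K k s\<bar> \<le> \<epsilon>}"
    using measure_pmf.prob_compl[of "{s. \<bar>agent_exp P f K i s - agent_exp P f K k s\<bar> \<le> \<epsilon>}" P]
    unfolding D_def by (simp add: Compl_eq_Diff_UNIV[symmetric] not_le Collect_neg_eq[symmetric])
  with le have "\<delta> \<le> (\<Sum>s\<in>S. pmf P s * indicator D s)"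
    using measure_pmf_prob_eq_sum[OF S P] by simp
  moreover have "i \<noteq> k"
  proof
    assume "i = k"
    then have "D = {}" unfolding D_def using \<open>0 \<le> \<epsilon>\<close> by auto
    then show False using \<open>0 < \<delta>\<close> calculation by simp
  qed
  ultimately show thesis using that ik unfolding D_def by blast
qed

lemma not_global_agree_le_one: "\<not> global_agree P f N K \<epsilon> \<delta> \<Longrightarrow> \<delta> \<le> 1"
  unfolding global_agree_def using measure_nonneg[of "measure_pmf P"] by (meson diff_ge_0_iff_ge not_less order_trans)

lemma gap_prob_le_mean_sq_dev:
  assumes "0 \<le> \<epsilon>"
  shows "(\<Sum>s\<in>S. pmf P s * indicator {s. \<epsilon> < \<bar>a s - b s\<bar>} s) * (\<epsilon>\<^sup>2 / 2)
    \<le> mean_sq_diff P S W a + mean_sq_diff P S W b"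
proof -
  have "\<epsilon>\<^sup>2 / 2 * indicator {s. \<epsilon> < \<bar>a s - b s\<bar>} s \<le> (W s - a s)\<^sup>2 + (W s - b s)\<^sup>2" for s
  proof (cases "\<epsilon> < \<bar>a s - b s\<bar>")
    case True
    then have "\<epsilon>\<^sup>2 \<le> (a s - b s)\<^sup>2" using assms by (metis abs_le_square_iff abs_of_nonneg less_le)
    moreover have "0 \<le> (2 * W s - a s - b s)\<^sup>2" by simp
    ultimately show ?thesis using True by (simp add: power2_eq_square algebra_simps)
  qed simp
  then have "(\<Sum>s\<in>S. pmf P s * (\<epsilon>\<^sup>2 / 2 * indicator {s. \<epsilon> < \<bar>a s - b s\<bar>} s))
      \<le> (\<Sum>s\<in>S. pmf P s * ((W s - a s)\<^sup>2 + (W s - b s)\<^sup>2))"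
    by (intro sum_mono mult_left_mono) simp_all
  then show ?thesis
    unfolding mean_sq_diff_def sum_distrib_right sum.distrib[symmetric] by (simp add: algebra_simps)
qed

lemma block_change_ge_level_cexp_dist:
  fixes P :: "nat pmf" and f :: "nat \<Rightarrow> real"
  assumes S: "finite S" and sp: "spanning_trees N E pin pout"
    and Kb: "is_partition_of S (Kb j)" and A: "A \<subseteq> {1..N}" and j: "j \<in> A"
  defines "Lev s \<equiv> S \<inter> {s'. \<forall>l\<in>A. agent_exp P f Kb l s' = agent_exp P f Kb l s}"
  shows "mean_sq_diff P S (\<lambda>s. cexp P f (Lev s)) (agent_exp P f Kb j)
    \<le> mean_sq_diff P S (agent_exp P f (run_msgs P f (st_sched N pin pout) Kb) j) (agent_exp P f Kb j)"
proof -
  define K' where "K' = run_msgs P f (st_sched N pin pout) Kb"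
  have j': "j \<in> {1..N}" using j A by blast
  have K': "is_partition_of S (K' j)"
    unfolding K'_def using Kb by (rule run_msgs_partition)
  have "is_partition_of S (\<lambda>_. S)" unfolding is_partition_of_def by blast
  then have Lev: "is_partition_of S Lev"
    unfolding Lev_def by (rule partition_inter_level_sets)
  have "K' j s \<subseteq> Lev s" if s: "s \<in> S" for s
  proof
    fix s' assume s': "s' \<in> K' j s"
    have "s' \<in> S" using partition_cell_self(2)[OF K' s] s' by blast
    moreover have "agent_exp P f Kb l s' = agent_exp P f Kb l s" if "l \<in> A" for l
      using block_cell_level_set[OF sp Kb j' s _ s'[unfolded K'_def]] that A by blast
    ultimately show "s' \<in> Lev s" unfolding Lev_def by blast
  qed
  moreover have "agent_exp P f Kb j t = agent_exp P f Kb j s" if "t \<in> Lev s" for s t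
    using that j unfolding Lev_def by blast
  ultimately have "mean_sq_diff P S (agent_exp P f K' j) (agent_exp P f Kb j)
      = mean_sq_diff P S (agent_exp P f K' j) (\<lambda>s. cexp P f (Lev s))
      + mean_sq_diff P S (\<lambda>s. cexp P f (Lev s)) (agent_exp P f Kb j)"
    using cexp_pythagoras[OF S K' Lev, of "agent_exp P f Kb j" P f]
    unfolding agent_exp_def by simp
  then show ?thesis using mean_sq_diff_nonneg unfolding K'_def by simp
qed

lemma block_gain:
  assumes S: "finite S" and P: "set_pmf P \<subseteq> S" and sp: "spanning_trees N E pin pout"
    and Kb: "\<And>i. i \<in> {1..N} \<Longrightarrow> is_partition_of S (Kb i)"
    and "0 \<le> \<epsilon>" "0 < \<delta>" and disagree: "\<not> global_agree P f N Kb \<epsilon> \<delta>"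
  shows "potential P f N S Kb + \<delta> * \<epsilon>\<^sup>2 / 2 \<le> potential P f N S (run_msgs P f (st_sched N pin pout) Kb)"
proof -
  define K' where "K' = run_msgs P f (st_sched N pin pout) Kb"
  define g where "g j = mean_sq_diff P S (agent_exp P f K' j) (agent_exp P f Kb j)" for j
  have increment: "potential P f N S K' = potential P f N S Kb + (\<Sum>j\<in>{1..N}. g j)"
    unfolding g_def K'_def using S Kb run_msgs_partition[OF Kb] run_msgs_subset
    by (rule potential_increment)
  obtain i k where ik: "i \<in> {1..N}" "k \<in> {1..N}" "i \<noteq> k"
    and mass: "\<delta> \<le> (\<Sum>s\<in>S. pmf P s * indicator {s. \<epsilon> < \<bar>agent_exp P f Kb i s - agent_exp P f Kb k s\<bar>} s)"
    using disagreement_prob[OF S P \<open>0 \<le> \<epsilon>\<close> \<open>0 < \<delta>\<close> disagree] by blast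
  define W where "W s = cexp P f (S \<inter> {s'. \<forall>l\<in>{i, k}. agent_exp P f Kb l s' = agent_exp P f Kb l s})" for s
  have W: "mean_sq_diff P S W (agent_exp P f Kb j) \<le> g j" if j: "j \<in> {i, k}" for j
  proof -
    have "j \<in> {1..N}" "{i, k} \<subseteq> {1..N}" using ik j by auto
    then show ?thesis unfolding W_def g_def K'_def
      by (intro block_change_ge_level_cexp_dist[where Kb = Kb and j = j, OF S sp Kb] j)
  qed
  have "\<delta> * \<epsilon>\<^sup>2 / 2 \<le> (\<Sum>s\<in>S. pmf P s * indicator {s. \<epsilon> < \<bar>agent_exp P f Kb i s - agent_exp P f Kb k s\<bar>} s) * (\<epsilon>\<^sup>2 / 2)"
    using mult_right_mono[OF mass, of "\<epsilon>\<^sup>2 / 2"] by simp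
  also have "\<dots> \<le> mean_sq_diff P S W (agent_exp P f Kb i) + mean_sq_diff P S W (agent_exp P f Kb k)"
    using \<open>0 \<le> \<epsilon>\<close> by (rule gap_prob_le_mean_sq_dev)
  also have "\<dots> \<le> (\<Sum>j\<in>{i, k}. g j)"
    using W ik(3) by (simp add: add_mono)
  also have "\<dots> \<le> (\<Sum>j\<in>{1..N}. g j)"
    using ik mean_sq_diff_nonneg unfolding g_def by (intro sum_mono2) auto
  finally show ?thesis using increment unfolding K'_def by simp
qed

section \<open>Counting blocks\<close>

lemma ex_success_within_potential_budget:
  fixes \<Phi> :: "nat \<Rightarrow> real"
  assumes c: "0 < c" and bounded: "\<And>n. \<Phi> n \<le> B"
    and gain: "\<And>n. \<not> G n \<Longrightarrow> \<Phi> n + c \<le> \<Phi> (Suc n)"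
  shows "\<exists>n. G n \<and> \<Phi> 0 + real n * c \<le> B"
proof -
  have grow: "\<Phi> 0 + real n * c \<le> \<Phi> n" if "\<forall>m<n. \<not> G m" for n
    using that
  proof (induction n)
    case (Suc n)
    then have "\<Phi> 0 + real n * c \<le> \<Phi> n" "\<Phi> n + c \<le> \<Phi> (Suc n)" using gain by auto
    then show ?case by (simp add: algebra_simps)
  qed simp
  obtain n0 where "B - \<Phi> 0 < real n0 * c" using ex_less_of_nat_mult[OF c] by blast
  then have "\<exists>n. G n" using grow[of n0] bounded[of n0] by fastforce
  then obtain n where "G n" and "\<forall>m<n. \<not> G m" by (metis exists_least_iff)
  then show ?thesis using grow bounded by (meson order_trans)
qed

lemma block_count_to_message_bound:
  assumes n: "real n * x \<le> 2 * real N" and L: "L \<le> 2 * N" and N: "1 \<le> N" and x: "0 < x"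
  shows "real (n * L) \<le> 4 * real N ^ 7 / x"
proof -
  have "real (n * L) * x = real L * (real n * x)" by simp
  also have "\<dots> \<le> (2 * real N) * (2 * real N)"
    by (rule mult_mono) (use n L x in auto)
  also have "\<dots> \<le> 4 * real N ^ 7"
    using N power_increasing[of 2 7 "real N"] by (simp add: power2_eq_square)
  finally show ?thesis using x by (simp add: pos_le_divide_eq)
qed

lemma ex_agreeing_block:
  assumes S: "finite S" and P: "set_pmf P \<subseteq> S" and f: "\<And>s. s \<in> S \<Longrightarrow> 0 \<le> f s \<and> f s \<le> 1"
    and sp: "spanning_trees N E pin pout" and K0: "\<And>i. i \<in> {1..N} \<Longrightarrow> is_partition_of S (K0 i)"
    and \<epsilon>: "0 < \<epsilon>" and \<delta>: "0 < \<delta>"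
  shows "\<exists>n. global_agree P f N ((run_msgs P f (st_sched N pin pout) ^^ n) K0) \<epsilon> \<delta>
    \<and> real n * (\<delta> * \<epsilon>)\<^sup>2 \<le> 2 * real N"
proof -
  define R where "R = run_msgs P f (st_sched N pin pout)"
  have K: "is_partition_of S ((R ^^ n) K0 i)" if "i \<in> {1..N}" for n i
    using that K0 unfolding R_def by (induction n) (simp_all add: run_msgs_partition)
  have bounded: "potential P f N S ((R ^^ n) K0) \<le> N" for n
    using S P f K by (rule potential_le)
  have step: "potential P f N S ((R ^^ n) K0) + (\<delta> * \<epsilon>)\<^sup>2 / 2 \<le> potential P f N S ((R ^^ Suc n) K0)"
    if disagree: "\<not> global_agree P f N ((R ^^ n) K0) \<epsilon> \<delta>" for n
  proof -
    have "\<delta>\<^sup>2 \<le> \<delta>"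
      using not_global_agree_le_one[OF disagree] \<delta> by (simp add: power2_eq_square mult_left_le_one_le)
    then have "(\<delta> * \<epsilon>)\<^sup>2 \<le> \<delta> * \<epsilon>\<^sup>2"
      by (simp add: power_mult_distrib mult_right_mono)
    then show ?thesis
      using block_gain[OF S P sp K[where n = n] less_imp_le[OF \<epsilon>] \<delta> disagree] unfolding R_def by simp
  qed
  obtain n where "global_agree P f N ((R ^^ n) K0) \<epsilon> \<delta>"
    and "potential P f N S K0 + real n * ((\<delta> * \<epsilon>)\<^sup>2 / 2) \<le> N"
    using ex_success_within_potential_budget[of "(\<delta> * \<epsilon>)\<^sup>2 / 2" "\<lambda>n. potential P f N S ((R ^^ n) K0)"
        _ "\<lambda>n. global_agree P f N ((R ^^ n) K0) \<epsilon> \<delta>", OF _ bounded step] \<epsilon> \<delta> by auto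
  then show ?thesis using potential_nonneg[of P f N S K0] unfolding R_def by auto
qed

theorem lemma3:
  "\<exists>C>0. \<forall>(N::nat) (S::nat set) (P::nat pmf) (f::nat \<Rightarrow> real) (K0::kstate)
          (E::(nat \<times> nat) set) (pin::nat \<Rightarrow> nat) (pout::nat \<Rightarrow> nat) (\<epsilon>::real) (\<delta>::real).
     N \<ge> 1 \<and> finite S \<and> set_pmf P \<subseteq> S \<and> (\<forall>s\<in>S. 0 \<le> f s \<and> f s \<le> 1) \<and>
     (\<forall>i\<in>{1..N}. is_partition_of S (K0 i)) \<and> spanning_trees N E pin pout \<and>
     \<epsilon> > 0 \<and> \<delta> > 0 \<longrightarrow>
     (\<exists>T::nat. real T \<le> C * real N ^ 7 / (\<delta> * \<epsilon>) ^ 2 \<and>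
               global_agree P f N (st_run P f N pin pout K0 T) \<epsilon> \<delta>)"
proof (intro exI[of _ "4::real"] conjI allI impI)
  fix N :: nat and S :: "nat set" and P :: "nat pmf" and f :: "nat \<Rightarrow> real" and K0 :: kstate
    and E :: "(nat \<times> nat) set" and pin pout :: "nat \<Rightarrow> nat" and \<epsilon> \<delta> :: real
  assume "N \<ge> 1 \<and> finite S \<and> set_pmf P \<subseteq> S \<and> (\<forall>s\<in>S. 0 \<le> f s \<and> f s \<le> 1) \<and>
     (\<forall>i\<in>{1..N}. is_partition_of S (K0 i)) \<and> spanning_trees N E pin pout \<and> \<epsilon> > 0 \<and> \<delta> > 0"
  then have N: "1 \<le> N" and \<epsilon>: "0 < \<epsilon>" and \<delta>: "0 < \<delta>"
    and "\<exists>n. global_agree P f N ((run_msgs P f (st_sched N pin pout) ^^ n) K0) \<epsilon> \<delta>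
      \<and> real n * (\<delta> * \<epsilon>)\<^sup>2 \<le> 2 * real N"
    by (auto intro: ex_agreeing_block)
  then obtain n where agree: "global_agree P f N ((run_msgs P f (st_sched N pin pout) ^^ n) K0) \<epsilon> \<delta>"
    and blocks: "real n * (\<delta> * \<epsilon>)\<^sup>2 \<le> 2 * real N"
    by blast
  have "real (n * length (st_sched N pin pout)) \<le> 4 * real N ^ 7 / (\<delta> * \<epsilon>)\<^sup>2"
    using blocks length_st_sched N by (rule block_count_to_message_bound) (use \<epsilon> \<delta> in simp)
  then show "\<exists>T::nat. real T \<le> 4 * real N ^ 7 / (\<delta> * \<epsilon>) ^ 2 \<and> global_agree P f N (st_run P f N pin pout K0 T) \<epsilon> \<delta>"
    using agree by (metis st_run_block_multiple)
qed simp

end
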